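(* Let $B\in\mathcal A_n$. The ASMs covered by $B$ in ASM order are exactly the matrices $r_{i,i+1}^{k,k+1}(B)$ where $R_{i,i+1}^{k,k+1}$ ranges over the essential points of $B$, and distinct essential points give distinct such ASMs; thus essential points of $B$ are in bijection with the elements covered by $B$. Consequently, every covering relation $A\lessdot B$ in ASM order is an edge $A\to B$ of the ASM graph.
   Context: $\mathcal A_n$ is the set of $n\times n$ alternating sign matrices (entries in $\{-1,0,1\}$, partial row and column sums in $\{0,1\}$, full row and column sums $1$). The corner sum matrix is $\widetilde A(i,j)=\sum_{p\le i,q\le j}a_{pq}$, with $\widetilde A(i,j)=0$ if $i=0$ or $j=0$. ASM order: $A\le B$ iff $\widetilde A(i,j)\ge\widetilde B(i,j)$ for all $i,j$. For $i<j$, $k<l$ in $[n]$, $R_{ij}^{kl}=\{(p,q): i\le p<j,\ k\le q<l\}$ and $\widetilde R_{ij}^{kl}$ is its $0/1$ indicator matrix. $E(A)$ (essential rectangles): those $R_{ij}^{kl}$ with, for all $(p,q)\in R_{ij}^{kl}$, $\widetilde A(p,k)=\widetilde A(p,k-1)$, $\widetilde A(p,l)=\widetilde A(p,l-1)+1$, $\widetilde A(i,q)=\widetilde A(i-1,q)$, $\widetilde A(j,q)=\widetilde A(j-1,q)+1$. $E^*(A)$ (dual essential rectangles): those with $\widetilde A(p,k)=\widetilde A(p,k-1)+1$, $\widetilde A(p,l)=\widetilde A(p,l-1)$, $\widetilde A(i,q)=\widetilde A(i-1,q)+1$, $\widetilde A(j,q)=\widetilde A(j-1,q)$. An essential point of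 $A$ is an essential rectangle $R_{ij}^{kl}\in E(A)$ with $j=i+1$ and $l=k+1$. The operator $r_{ij}^{kl}$ sends $A$ to the ASM with corner sum matrix $\widetilde A+\widetilde R_{ij}^{kl}$ if $R_{ij}^{kl}\in E(A)$, $\widetilde A-\widetilde R_{ij}^{kl}$ if $R_{ij}^{kl}\in E^*(A)$, $\widetilde A$ otherwise. The bigrassmannian statistic is $\beta(A)=\sum_{i,j}\min(i,j)-\sum_{i,j}\widetilde A(i,j)$. ASM graph edge: $A\to B$ if $B=r_{ij}^{kl}(A)$ for some $i<j$, $k<l$ and $\beta(A)<\beta(B)$. *)

theory Defs
  imports Main
begin

text \<open>An n x n matrix is a function nat => nat => int, with rows/columns indexed by 1..n
  and all entries outside [1..n] x [1..n] equal to 0.\<close>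

definition asm :: "nat \<Rightarrow> (nat \<Rightarrow> nat \<Rightarrow> int) \<Rightarrow> bool" where
  "asm n A \<longleftrightarrow>
     (\<forall>i j. (i \<notin> {1..n} \<or> j \<notin> {1..n}) \<longrightarrow> A i j = 0) \<and>
     (\<forall>i\<in>{1..n}. \<forall>j\<in>{1..n}. A i j \<in> {-1, 0, 1}) \<and>
     (\<forall>i\<in>{1..n}. \<forall>j\<in>{1..n}. (\<Sum>q=1..j. A i q) \<in> {0, 1}) \<and>
     (\<forall>j\<in>{1..n}. \<forall>i\<in>{1..n}. (\<Sum>p=1..i. A p j) \<in> {0, 1}) \<and>
     (\<forall>i\<in>{1..n}. (\<Sum>q=1..n. A i q) = 1) \<and>
     (\<forall>j\<in>{1..n}. (\<Sum>p=1..n. A p j) = 1)"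

definition csum :: "(nat \<Rightarrow> nat \<Rightarrow> int) \<Rightarrow> nat \<Rightarrow> nat \<Rightarrow> int" where
  "csum A i j = (\<Sum>p=1..i. \<Sum>q=1..j. A p q)"

definition asm_le :: "nat \<Rightarrow> (nat \<Rightarrow> nat \<Rightarrow> int) \<Rightarrow> (nat \<Rightarrow> nat \<Rightarrow> int) \<Rightarrow> bool" where
  "asm_le n A B \<longleftrightarrow> asm n A \<and> asm n B \<and>
     (\<forall>i\<in>{0..n}. \<forall>j\<in>{0..n}. csum A i j \<ge> csum B i j)"

definition asm_covers :: "nat \<Rightarrow> (nat \<Rightarrow> nat \<Rightarrow> int) \<Rightarrow> (nat \<Rightarrow> nat \<Rightarrow> int) \<Rightarrow> bool" where
  "asm_covers n A B \<longleftrightarrow> asm_le n A B \<and> A \<noteq> B \<and>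
     \<not> (\<exists>C. asm_le n A C \<and> asm_le n C B \<and> C \<noteq> A \<and> C \<noteq> B)"

definition rect_ind :: "nat \<Rightarrow> nat \<Rightarrow> nat \<Rightarrow> nat \<Rightarrow> nat \<Rightarrow> nat \<Rightarrow> int" where
  "rect_ind i j k l p q = (if i \<le> p \<and> p < j \<and> k \<le> q \<and> q < l then 1 else 0)"

definition valid_rect :: "nat \<Rightarrow> nat \<Rightarrow> nat \<Rightarrow> nat \<Rightarrow> nat \<Rightarrow> bool" where
  "valid_rect n i j k l \<longleftrightarrow> 1 \<le> i \<and> i < j \<and> j \<le> n \<and> 1 \<le> k \<and> k < l \<and> l \<le> n"

definition ess_rect :: "nat \<Rightarrow> (nat \<Rightarrow> nat \<Rightarrow> int) \<Rightarrow> nat \<Rightarrow> nat \<Rightarrow> nat \<Rightarrow> nat \<Rightarrow> bool" where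
  "ess_rect n A i j k l \<longleftrightarrow> valid_rect n i j k l \<and>
     (\<forall>p\<in>{i..<j}. \<forall>q\<in>{k..<l}.
        csum A p k = csum A p (k - 1) \<and>
        csum A p l = csum A p (l - 1) + 1 \<and>
        csum A i q = csum A (i - 1) q \<and>
        csum A j q = csum A (j - 1) q + 1)"

definition dual_ess_rect :: "nat \<Rightarrow> (nat \<Rightarrow> nat \<Rightarrow> int) \<Rightarrow> nat \<Rightarrow> nat \<Rightarrow> nat \<Rightarrow> nat \<Rightarrow> bool" where
  "dual_ess_rect n A i j k l \<longleftrightarrow> valid_rect n i j k l \<and>
     (\<forall>p\<in>{i..<j}. \<forall>q\<in>{k..<l}.
        csum A p k = csum A p (k - 1) + 1 \<and>
        csum A p l = csum A p (l - 1) \<and>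
        csum A i q = csum A (i - 1) q + 1 \<and>
        csum A j q = csum A (j - 1) q)"

definition ess_point :: "nat \<Rightarrow> (nat \<Rightarrow> nat \<Rightarrow> int) \<Rightarrow> nat \<Rightarrow> nat \<Rightarrow> bool" where
  "ess_point n A i k \<longleftrightarrow> ess_rect n A i (Suc i) k (Suc k)"

definition rop :: "nat \<Rightarrow> nat \<Rightarrow> nat \<Rightarrow> nat \<Rightarrow> nat \<Rightarrow> (nat \<Rightarrow> nat \<Rightarrow> int) \<Rightarrow> (nat \<Rightarrow> nat \<Rightarrow> int)" where
  "rop n i j k l A =
     (if ess_rect n A i j k l then
        (THE B. asm n B \<and> (\<forall>p\<in>{0..n}. \<forall>q\<in>{0..n}. csum B p q = csum A p q + rect_ind i j k l p q))
      else if dual_ess_rect n A i j k l then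
        (THE B. asm n B \<and> (\<forall>p\<in>{0..n}. \<forall>q\<in>{0..n}. csum B p q = csum A p q - rect_ind i j k l p q))
      else A)"

definition beta :: "nat \<Rightarrow> (nat \<Rightarrow> nat \<Rightarrow> int) \<Rightarrow> int" where
  "beta n A = (\<Sum>i=1..n. \<Sum>j=1..n. int (min i j)) - (\<Sum>i=1..n. \<Sum>j=1..n. csum A i j)"

definition asm_edge :: "nat \<Rightarrow> (nat \<Rightarrow> nat \<Rightarrow> int) \<Rightarrow> (nat \<Rightarrow> nat \<Rightarrow> int) \<Rightarrow> bool" where
  "asm_edge n A B \<longleftrightarrow> asm n A \<and> asm n B \<and>
     (\<exists>i j k l. valid_rect n i j k l \<and> B = rop n i j k l A) \<and> beta n A < beta n B"

end

theory Submission
  imports Defs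
begin

text \<open>
  An ASM is determined by its corner sum matrix, and the corner sum matrices of ASMs are exactly
  the integer matrices on \<open>[0..n]\<^sup>2\<close> with zero first row and column, last row and column
  \<open>0, 1, \<dots>, n\<close>, and all horizontal and vertical steps in \<open>{0, 1}\<close>. Hence the ASM order is the
  entrywise order on such matrices, reversed. Increasing the corner sum matrix of \<open>B\<close> by one at
  \<open>(i, k)\<close> keeps all steps in \<open>{0, 1}\<close> precisely when \<open>(i, k)\<close> is an essential point of \<open>B\<close>, and
  then gives an element covered by \<open>B\<close>. Conversely, if \<open>A < B\<close>, a point of the nonempty set where
  \<open>csum B < csum A\<close> minimising \<open>2 csum B (p, q) - p - q\<close> is an essential point of \<open>B\<close>: violating any
  of the four defining equations would move the minimum to a neighbouring point. If \<open>A\<close> is covered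
  by \<open>B\<close>, squeezing forces \<open>A\<close> to be the ASM obtained at that point, and that step lowers the sum
  of the corner sum matrix by one, i.e. raises \<open>\<beta>\<close> by one.
\<close>

section \<open>Corner sum matrices\<close>

lemma csum_0 [simp]: "csum A 0 j = 0" "csum A i 0 = 0"
  by (simp_all add: csum_def)

lemma csum_Suc_row: "csum A (Suc i) j = csum A i j + (\<Sum>q=1..j. A (Suc i) q)"
  unfolding csum_def by (simp add: sum.cl_ivl_Suc)

lemma csum_Suc_col: "csum A i (Suc j) = csum A i j + (\<Sum>p=1..i. A p (Suc j))"
  unfolding csum_def by (simp add: sum.cl_ivl_Suc sum.distrib)

lemma entry_eq_csum:
  "A (Suc p) (Suc q) = csum A (Suc p) (Suc q) - csum A p (Suc q) - csum A (Suc p) q + csum A p q"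
  by (simp add: csum_Suc_row sum.cl_ivl_Suc)

lemma row_partial_sum_eq_csum_diff:
  "1 \<le> i \<Longrightarrow> (\<Sum>q=1..j. A i q) = csum A i j - csum A (i - 1) j"
  by (cases i) (simp_all add: csum_Suc_row)

lemma col_partial_sum_eq_csum_diff:
  "1 \<le> j \<Longrightarrow> (\<Sum>p=1..i. A p j) = csum A i j - csum A i (j - 1)"
  by (cases j) (simp_all add: csum_Suc_col)

lemma asm_eqI_csum:
  assumes "asm n A" "asm n A'" "\<forall>p\<le>n. \<forall>q\<le>n. csum A p q = csum A' p q"
  shows "A = A'"
proof (intro ext)
  fix p q
  show "A p q = A' p q"
  proof (cases "p \<in> {1..n} \<and> q \<in> {1..n}")
    case True
    then obtain p' q' where "p = Suc p'" "q = Suc q'" "Suc p' \<le> n" "Suc q' \<le> n"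
      by (cases p; cases q) auto
    then show ?thesis
      using assms(3) by (simp add: entry_eq_csum[of A] entry_eq_csum[of A'])
  next
    case False
    then show ?thesis using assms(1,2) unfolding asm_def by auto
  qed
qed

lemma the_asm_with_csum:
  assumes "asm n A" "\<forall>p\<in>{0..n}. \<forall>q\<in>{0..n}. csum A p q = C p q"
  shows "(THE B. asm n B \<and> (\<forall>p\<in>{0..n}. \<forall>q\<in>{0..n}. csum B p q = C p q)) = A"
proof (rule the_equality)
  fix B
  assume "asm n B \<and> (\<forall>p\<in>{0..n}. \<forall>q\<in>{0..n}. csum B p q = C p q)"
  with assms show "B = A" by (intro asm_eqI_csum[of n]) auto
qed (use assms in blast)

definition corner_sum_matrix :: "nat \<Rightarrow> (nat \<Rightarrow> nat \<Rightarrow> int) \<Rightarrow> bool" where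
  "corner_sum_matrix n C \<longleftrightarrow>
     (\<forall>j\<le>n. C 0 j = 0) \<and> (\<forall>i\<le>n. C i 0 = 0) \<and>
     (\<forall>i\<le>n. C i n = int i) \<and> (\<forall>j\<le>n. C n j = int j) \<and>
     (\<forall>i\<in>{1..n}. \<forall>j\<in>{0..n}. C i j - C (i - 1) j \<in> {0, 1}) \<and>
     (\<forall>i\<in>{0..n}. \<forall>j\<in>{1..n}. C i j - C i (j - 1) \<in> {0, 1})"

lemma csum_last_col: "asm n A \<Longrightarrow> i \<le> n \<Longrightarrow> csum A i n = int i"
proof (induction i)
  case (Suc i)
  then have "(\<Sum>q=1..n. A (Suc i) q) = 1" unfolding asm_def by auto
  with Suc show ?case by (simp add: csum_Suc_row)
qed simp

lemma csum_last_row: "asm n A \<Longrightarrow> j \<le> n \<Longrightarrow> csum A n j = int j"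
proof (induction j)
  case (Suc j)
  then have "(\<Sum>p=1..n. A p (Suc j)) = 1" unfolding asm_def by auto
  with Suc show ?case by (simp add: csum_Suc_col)
qed simp

lemma csum_step_row:
  assumes "asm n A" "i \<in> {1..n}" "j \<le> n"
  shows "csum A i j - csum A (i - 1) j \<in> {0, 1}"
proof (cases "j = 0")
  case False
  then have "(\<Sum>q=1..j. A i q) \<in> {0, 1}" using assms unfolding asm_def by auto
  then show ?thesis using assms row_partial_sum_eq_csum_diff[of i A j] by simp
qed simp

lemma csum_step_col:
  assumes "asm n A" "i \<le> n" "j \<in> {1..n}"
  shows "csum A i j - csum A i (j - 1) \<in> {0, 1}"
proof (cases "i = 0")
  case False
  then have "(\<Sum>p=1..i. A p j) \<in> {0, 1}" using assms unfolding asm_def by auto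
  then show ?thesis using assms col_partial_sum_eq_csum_diff[of j A i] by simp
qed simp

lemma corner_sum_matrix_csum:
  assumes "asm n A"
  shows "corner_sum_matrix n (csum A)"
  unfolding corner_sum_matrix_def
  using csum_last_col[OF assms] csum_last_row[OF assms] csum_step_row[OF assms] csum_step_col[OF assms]
  by (simp del: insert_iff)

definition asm_of_csum :: "nat \<Rightarrow> (nat \<Rightarrow> nat \<Rightarrow> int) \<Rightarrow> nat \<Rightarrow> nat \<Rightarrow> int" where
  "asm_of_csum n C p q =
     (if p \<in> {1..n} \<and> q \<in> {1..n} then C p q - C (p - 1) q - C p (q - 1) + C (p - 1) (q - 1) else 0)"

lemma csum_asm_of_csum:
  assumes C: "corner_sum_matrix n C"
  shows "p \<le> n \<Longrightarrow> q \<le> n \<Longrightarrow> csum (asm_of_csum n C) p q = C p q"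
proof (induction p)
  case 0
  then show ?case using C by (simp add: corner_sum_matrix_def)
next
  case (Suc p)
  have "(\<Sum>q'=1..q. asm_of_csum n C (Suc p) q')
        = (\<Sum>q'=1..q. C (Suc p) q' - C (Suc p) (q' - 1)) - (\<Sum>q'=1..q. C p q' - C p (q' - 1))"
    using Suc.prems by (simp add: sum_subtractf[symmetric] asm_of_csum_def algebra_simps)
  also have "\<dots> = C (Suc p) q - C p q"
    using Suc.prems C by (simp add: sum_telescope''[of 0, simplified] corner_sum_matrix_def)
  finally show ?case using Suc by (simp add: csum_Suc_row)
qed

lemma asm_asm_of_csum:
  assumes C: "corner_sum_matrix n C"
  shows "asm n (asm_of_csum n C)"
proof -
  let ?A = "asm_of_csum n C"
  have rows: "(\<Sum>q=1..j. ?A i q) = C i j - C (i - 1) j" if "i \<in> {1..n}" "j \<le> n" for i j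
    using that row_partial_sum_eq_csum_diff[of i "asm_of_csum n C" j]
      csum_asm_of_csum[OF C, of i j] csum_asm_of_csum[OF C, of "i - 1" j] by auto
  have cols: "(\<Sum>p=1..i. ?A p j) = C i j - C i (j - 1)" if "i \<le> n" "j \<in> {1..n}" for i j
    using that col_partial_sum_eq_csum_diff[of j "asm_of_csum n C" i]
      csum_asm_of_csum[OF C, of i j] csum_asm_of_csum[OF C, of i "j - 1"] by auto
  have steps: "\<forall>i\<in>{1..n}. \<forall>j\<in>{0..n}. C i j - C (i - 1) j \<in> {0, 1}"
    "\<forall>i\<in>{0..n}. \<forall>j\<in>{1..n}. C i j - C i (j - 1) \<in> {0, 1}"
    and last: "\<forall>i\<le>n. C i n = int i" "\<forall>j\<le>n. C n j = int j"
    using C unfolding corner_sum_matrix_def by blast+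
  have "?A i j \<in> {-1, 0, 1}" if "i \<in> {1..n}" "j \<in> {1..n}" for i j
  proof -
    have "C i j - C (i - 1) j \<in> {0, 1}" "C i (j - 1) - C (i - 1) (j - 1) \<in> {0, 1}"
      using that steps(1)[rule_format, of i j] steps(1)[rule_format, of i "j - 1"] by auto
    with that show ?thesis by (auto simp: asm_of_csum_def)
  qed
  moreover have "(\<Sum>q=1..n. ?A i q) = 1" if "i \<in> {1..n}" for i
    using that rows[of i n] last(1)[rule_format, of i] last(1)[rule_format, of "i - 1"]
    by (auto simp: of_nat_diff)
  moreover have "(\<Sum>p=1..n. ?A p j) = 1" if "j \<in> {1..n}" for j
    using that cols[of n j] last(2)[rule_format, of j] last(2)[rule_format, of "j - 1"]
    by (auto simp: of_nat_diff)
  ultimately show ?thesis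
    unfolding asm_def using rows cols steps by (auto simp: asm_of_csum_def)
qed

section \<open>Adding a point to a corner sum matrix\<close>

definition point_ind :: "nat \<Rightarrow> nat \<Rightarrow> nat \<Rightarrow> nat \<Rightarrow> int" where
  "point_ind i k p q = (if p = i \<and> q = k then 1 else 0)"

lemma rect_ind_point: "rect_ind i (Suc i) k (Suc k) = point_ind i k"
  by (auto simp: rect_ind_def point_ind_def intro!: ext)

lemma ess_point_iff:
  "ess_point n B i k \<longleftrightarrow> 1 \<le> i \<and> i < n \<and> 1 \<le> k \<and> k < n \<and>
     csum B i k = csum B i (k - 1) \<and> csum B i (Suc k) = csum B i k + 1 \<and>
     csum B i k = csum B (i - 1) k \<and> csum B (Suc i) k = csum B i k + 1"
  unfolding ess_point_def ess_rect_def valid_rect_def by auto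

lemma dual_ess_point_iff:
  "dual_ess_rect n B i (Suc i) k (Suc k) \<longleftrightarrow> 1 \<le> i \<and> i < n \<and> 1 \<le> k \<and> k < n \<and>
     csum B i k = csum B i (k - 1) + 1 \<and> csum B i (Suc k) = csum B i k \<and>
     csum B i k = csum B (i - 1) k + 1 \<and> csum B (Suc i) k = csum B i k"
  unfolding dual_ess_rect_def valid_rect_def by auto

lemma corner_sum_matrix_add_point:
  assumes C: "corner_sum_matrix n C" and ik: "1 \<le> i" "i < n" "1 \<le> k" "k < n"
    and ess: "C i k = C i (k - 1)" "C i (Suc k) = C i k + 1"
      "C i k = C (i - 1) k" "C (Suc i) k = C i k + 1"
  shows "corner_sum_matrix n (\<lambda>p q. C p q + point_ind i k p q)"
proof -
  have steps: "\<forall>p\<in>{1..n}. \<forall>q\<in>{0..n}. C p q - C (p - 1) q \<in> {0, 1}"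
    "\<forall>p\<in>{0..n}. \<forall>q\<in>{1..n}. C p q - C p (q - 1) \<in> {0, 1}"
    using C unfolding corner_sum_matrix_def by blast+
  have off_point: "point_ind i k p q = 0" if "p = 0 \<or> q = 0 \<or> p = n \<or> q = n" for p q
    using that ik by (auto simp: point_ind_def)
  have "(C p q + point_ind i k p q) - (C (p - 1) q + point_ind i k (p - 1) q) \<in> {0, 1}"
    if "p \<in> {1..n}" "q \<in> {0..n}" for p q
  proof (cases "q = k \<and> (p = i \<or> p = Suc i)")
    case False
    then have "point_ind i k p q = 0" "point_ind i k (p - 1) q = 0"
      using that by (auto simp: point_ind_def)
    then show ?thesis using that steps(1) by simp
  next
    case True
    then consider "p = i" "q = k" | "p = Suc i" "q = k" by blast
    then show ?thesis using ik ess by cases (simp_all add: point_ind_def)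
  qed
  moreover have "(C p q + point_ind i k p q) - (C p (q - 1) + point_ind i k p (q - 1)) \<in> {0, 1}"
    if "p \<in> {0..n}" "q \<in> {1..n}" for p q
  proof (cases "p = i \<and> (q = k \<or> q = Suc k)")
    case False
    then have "point_ind i k p q = 0" "point_ind i k p (q - 1) = 0"
      using that by (auto simp: point_ind_def)
    then show ?thesis using that steps(2) by simp
  next
    case True
    then consider "p = i" "q = k" | "p = i" "q = Suc k" by blast
    then show ?thesis using ik ess by cases (simp_all add: point_ind_def)
  qed
  ultimately show ?thesis
    using C unfolding corner_sum_matrix_def by (simp add: off_point)
qed

lemma corner_sum_matrix_csum_add_ess_point:
  assumes "asm n B" "ess_point n B i k"
  shows "corner_sum_matrix n (\<lambda>p q. csum B p q + point_ind i k p q)"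
  using assms unfolding ess_point_iff by (intro corner_sum_matrix_add_point corner_sum_matrix_csum) auto

lemma rop_ess_point_eq:
  assumes B: "asm n B" and e: "ess_point n B i k"
  shows "rop n i (Suc i) k (Suc k) B = asm_of_csum n (\<lambda>p q. csum B p q + point_ind i k p q)"
proof -
  let ?C = "\<lambda>p q. csum B p q + point_ind i k p q"
  have "asm n (asm_of_csum n ?C)" "\<forall>p\<in>{0..n}. \<forall>q\<in>{0..n}. csum (asm_of_csum n ?C) p q = ?C p q"
    using corner_sum_matrix_csum_add_ess_point[OF B e] by (auto simp: asm_asm_of_csum csum_asm_of_csum)
  then show ?thesis
    using e the_asm_with_csum by (simp add: rop_def rect_ind_point ess_point_def)
qed

lemma rop_ess_point:
  assumes B: "asm n B" and e: "ess_point n B i k"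
  shows "asm n (rop n i (Suc i) k (Suc k) B)"
    and "p \<le> n \<Longrightarrow> q \<le> n \<Longrightarrow> csum (rop n i (Suc i) k (Suc k) B) p q = csum B p q + point_ind i k p q"
  using corner_sum_matrix_csum_add_ess_point[OF B e]
  by (simp_all add: rop_ess_point_eq[OF B e] asm_asm_of_csum csum_asm_of_csum)

section \<open>Covers in the ASM order\<close>

lemma asm_covers_if_csum_add_point:
  assumes A: "asm n A" and B: "asm n B" and ik: "i \<le> n" "k \<le> n"
    and csA: "\<forall>p\<le>n. \<forall>q\<le>n. csum A p q = csum B p q + point_ind i k p q"
  shows "asm_covers n A B"
proof -
  have "csum A i k = csum B i k + 1"
    using csA ik by (simp add: point_ind_def)
  then have "A \<noteq> B" by auto
  moreover have "C = A \<or> C = B" if "asm_le n A C" "asm_le n C B" for C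
  proof -
    have C: "asm n C" and lo: "\<forall>p\<le>n. \<forall>q\<le>n. csum B p q \<le> csum C p q"
      and hi: "\<forall>p\<le>n. \<forall>q\<le>n. csum C p q \<le> csum B p q + point_ind i k p q"
      using that csA unfolding asm_le_def by auto
    consider "csum C i k = csum B i k" | "csum C i k = csum B i k + 1"
      using lo hi ik by (force simp: point_ind_def)
    then show ?thesis
    proof cases
      case 1
      have "csum C p q = csum B p q" if "p \<le> n" "q \<le> n" for p q
        using 1 lo[rule_format, OF that] hi[rule_format, OF that]
        by (auto simp: point_ind_def split: if_splits)
      then show ?thesis using asm_eqI_csum[OF C B] by blast
    next
      case 2
      have "csum C p q = csum A p q" if "p \<le> n" "q \<le> n" for p q
        using 2 lo[rule_format, OF that] hi[rule_format, OF that] csA[rule_format, OF that]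
        by (auto simp: point_ind_def split: if_splits)
      then show ?thesis using asm_eqI_csum[OF C A] by blast
    qed
  qed
  moreover have "asm_le n A B"
    using A B csA unfolding asm_le_def by (simp add: point_ind_def)
  ultimately show ?thesis
    unfolding asm_covers_def by blast
qed

lemma asm_covers_rop_ess_point:
  assumes "asm n B" "ess_point n B i k"
  shows "asm_covers n (rop n i (Suc i) k (Suc k) B) B"
proof (rule asm_covers_if_csum_add_point[of n _ B i k])
  show "i \<le> n" "k \<le> n" using assms(2) by (simp_all add: ess_point_iff)
qed (use assms rop_ess_point[OF assms] in auto)

lemma ess_point_where_csum_less:
  assumes A: "asm n A" and B: "asm n B" and le: "\<forall>p\<le>n. \<forall>q\<le>n. csum B p q \<le> csum A p q"
    and ne: "A \<noteq> B"
  obtains i k where "ess_point n B i k" "csum B i k < csum A i k"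
proof -
  define S where "S = {(p, q). p \<le> n \<and> q \<le> n \<and> csum B p q < csum A p q}"
  define g where "g = (\<lambda>(p, q). 2 * csum B p q - int p - int q)"
  have "finite S"
    by (rule finite_subset[of _ "{0..n} \<times> {0..n}"]) (auto simp: S_def)
  moreover have "S \<noteq> {}"
  proof -
    obtain p q where pq: "p \<le> n" "q \<le> n" "csum A p q \<noteq> csum B p q"
      using ne asm_eqI_csum[OF A B] by blast
    then have "(p, q) \<in> S"
      using le[rule_format, OF pq(1,2)] by (simp add: S_def)
    then show ?thesis by blast
  qed
  moreover obtain i k where "(i, k) = arg_min_on g S"
    by (metis surj_pair)
  ultimately have ikS: "(i, k) \<in> S" and min: "\<And>x. x \<in> S \<Longrightarrow> \<not> g x < g (i, k)"
    using arg_min_if_finite[of S g] by auto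
  have ik: "i \<le> n" "k \<le> n" and less: "csum B i k < csum A i k"
    using ikS by (auto simp: S_def)
  have "i \<noteq> 0" "k \<noteq> 0"
    using less by (cases i; cases k; simp)+
  moreover have "i \<noteq> n"
    using less csum_last_row[OF A ik(2)] csum_last_row[OF B ik(2)] by auto
  moreover have "k \<noteq> n"
    using less csum_last_col[OF A ik(1)] csum_last_col[OF B ik(1)] by auto
  ultimately have bounds: "1 \<le> i" "i < n" "1 \<le> k" "k < n"
    using ik by auto
  \<comment> \<open>each failing equation puts a neighbour of \<open>(i, k)\<close> into \<open>S\<close> with a smaller value of \<open>g\<close>\<close>
  have "csum B i k = csum B i (k - 1)"
  proof (rule ccontr)
    assume "csum B i k \<noteq> csum B i (k - 1)"
    then have "csum B i (k - 1) = csum B i k - 1" "csum A i k - 1 \<le> csum A i (k - 1)"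
      using csum_step_col[OF B, of i k] csum_step_col[OF A, of i k] ik bounds by auto
    then have "(i, k - 1) \<in> S" "g (i, k - 1) < g (i, k)"
      using ik less bounds by (auto simp: S_def g_def of_nat_diff)
    then show False using min by blast
  qed
  moreover have "csum B i (Suc k) = csum B i k + 1"
  proof (rule ccontr)
    assume "csum B i (Suc k) \<noteq> csum B i k + 1"
    then have "csum B i (Suc k) = csum B i k" "csum A i k \<le> csum A i (Suc k)"
      using csum_step_col[OF B, of i "Suc k"] csum_step_col[OF A, of i "Suc k"] ik bounds by auto
    then have "(i, Suc k) \<in> S" "g (i, Suc k) < g (i, k)"
      using ik less bounds by (auto simp: S_def g_def)
    then show False using min by blast
  qed
  moreover have "csum B i k = csum B (i - 1) k"
  proof (rule ccontr)
    assume "csum B i k \<noteq> csum B (i - 1) k"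
    then have "csum B (i - 1) k = csum B i k - 1" "csum A i k - 1 \<le> csum A (i - 1) k"
      using csum_step_row[OF B, of i k] csum_step_row[OF A, of i k] ik bounds by auto
    then have "(i - 1, k) \<in> S" "g (i - 1, k) < g (i, k)"
      using ik less bounds by (auto simp: S_def g_def of_nat_diff)
    then show False using min by blast
  qed
  moreover have "csum B (Suc i) k = csum B i k + 1"
  proof (rule ccontr)
    assume "csum B (Suc i) k \<noteq> csum B i k + 1"
    then have "csum B (Suc i) k = csum B i k" "csum A i k \<le> csum A (Suc i) k"
      using csum_step_row[OF B, of "Suc i" k] csum_step_row[OF A, of "Suc i" k] ik bounds by auto
    then have "(Suc i, k) \<in> S" "g (Suc i, k) < g (i, k)"
      using ik less bounds by (auto simp: S_def g_def)
    then show False using min by blast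
  qed
  ultimately have "ess_point n B i k"
    unfolding ess_point_iff using bounds by blast
  with less that show ?thesis by blast
qed

lemma asm_covers_imp_rop_ess_point:
  assumes B: "asm n B" and cov: "asm_covers n A B"
  obtains i k where "ess_point n B i k" "A = rop n i (Suc i) k (Suc k) B"
proof -
  have A: "asm n A" and le: "\<forall>p\<le>n. \<forall>q\<le>n. csum B p q \<le> csum A p q" and "A \<noteq> B"
    using cov unfolding asm_covers_def asm_le_def by auto
  then obtain i k where e: "ess_point n B i k" and less: "csum B i k < csum A i k"
    using ess_point_where_csum_less[OF A B] by blast
  let ?A' = "rop n i (Suc i) k (Suc k) B"
  have "asm_le n A ?A'"
    using A le less rop_ess_point[OF B e] unfolding asm_le_def by (auto simp: point_ind_def)
  moreover have "asm_le n ?A' B" "?A' \<noteq> B"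
    using asm_covers_rop_ess_point[OF B e] unfolding asm_covers_def by auto
  ultimately have "A = ?A'"
    using cov unfolding asm_covers_def by blast
  with e that show ?thesis by blast
qed

section \<open>Edges of the ASM graph\<close>

lemma rop_rop_ess_point:
  assumes B: "asm n B" and e: "ess_point n B i k"
  shows "rop n i (Suc i) k (Suc k) (rop n i (Suc i) k (Suc k) B) = B"
proof -
  let ?A = "rop n i (Suc i) k (Suc k) B"
  have cs: "p \<le> n \<Longrightarrow> q \<le> n \<Longrightarrow> csum ?A p q = csum B p q + point_ind i k p q" for p q
    using rop_ess_point(2)[OF B e] .
  have bounds: "1 \<le> i" "i < n" "1 \<le> k" "k < n"
    using e by (simp_all add: ess_point_iff)
  have "csum ?A i k = csum B i k + 1" "csum ?A i (k - 1) = csum B i (k - 1)"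
    "csum ?A i (Suc k) = csum B i (Suc k)" "csum ?A (i - 1) k = csum B (i - 1) k"
    "csum ?A (Suc i) k = csum B (Suc i) k"
    using bounds by (auto simp: cs point_ind_def)
  then have "\<not> ess_rect n ?A i (Suc i) k (Suc k)" "dual_ess_rect n ?A i (Suc i) k (Suc k)"
    using e unfolding ess_point_def[symmetric] ess_point_iff dual_ess_point_iff by auto
  moreover have "\<forall>p\<in>{0..n}. \<forall>q\<in>{0..n}. csum B p q = csum ?A p q - rect_ind i (Suc i) k (Suc k) p q"
    by (simp add: cs rect_ind_point)
  ultimately show ?thesis
    using the_asm_with_csum[OF B] by (simp add: rop_def)
qed

lemma beta_rop_ess_point:
  assumes B: "asm n B" and e: "ess_point n B i k"
  shows "beta n (rop n i (Suc i) k (Suc k) B) = beta n B - 1"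
proof -
  have ik: "i \<in> {1..n}" "k \<in> {1..n}"
    using e by (simp_all add: ess_point_iff)
  have "(\<Sum>p=1..n. \<Sum>q=1..n. csum (rop n i (Suc i) k (Suc k) B) p q)
        = (\<Sum>p=1..n. \<Sum>q=1..n. csum B p q) + (\<Sum>p=1..n. \<Sum>q=1..n. point_ind i k p q)"
    by (simp add: rop_ess_point(2)[OF B e] sum.distrib)
  also have "(\<Sum>p=1..n. \<Sum>q=1..n. point_ind i k p q) = (\<Sum>p=1..n. if p = i then 1 else 0)"
    using ik by (intro sum.cong) (auto simp: point_ind_def)
  also have "\<dots> = 1"
    using ik by simp
  finally show ?thesis
    unfolding beta_def by simp
qed

lemma asm_edge_rop_ess_point:
  assumes B: "asm n B" and e: "ess_point n B i k"
  shows "asm_edge n (rop n i (Suc i) k (Suc k) B) B"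
proof -
  have "valid_rect n i (Suc i) k (Suc k)"
    using e by (auto simp: ess_point_iff valid_rect_def)
  then show ?thesis
    unfolding asm_edge_def
    using B rop_ess_point(1)[OF B e] rop_rop_ess_point[OF B e] beta_rop_ess_point[OF B e] by force
qed

lemma inj_on_rop_ess_point:
  assumes B: "asm n B"
  shows "inj_on (\<lambda>(i, k). rop n i (Suc i) k (Suc k) B) {(i, k). ess_point n B i k}"
proof (rule inj_onI)
  fix x x'
  assume "x \<in> {(i, k). ess_point n B i k}" "x' \<in> {(i, k). ess_point n B i k}"
    and eq: "(\<lambda>(i, k). rop n i (Suc i) k (Suc k) B) x = (\<lambda>(i, k). rop n i (Suc i) k (Suc k) B) x'"
  then obtain i k i' k' where x: "x = (i, k)" "x' = (i', k')"
    and e: "ess_point n B i k" "ess_point n B i' k'" by auto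
  have "i \<le> n" "k \<le> n" using e(1) by (simp_all add: ess_point_iff)
  \<comment> \<open>the two corner sum matrices differ from \<open>csum B\<close> exactly at \<open>(i, k)\<close> and \<open>(i', k')\<close>\<close>
  then have "point_ind i k i k = point_ind i' k' i k"
    using rop_ess_point(2)[OF B e(1)] rop_ess_point(2)[OF B e(2)] eq x by simp
  then show "x = x'" using x by (simp add: point_ind_def split: if_splits)
qed

theorem mainTheorem7:
  fixes n :: nat and B :: "nat \<Rightarrow> nat \<Rightarrow> int"
  assumes "asm n B"
  shows "bij_betw (\<lambda>(i, k). rop n i (Suc i) k (Suc k) B)
           {(i, k). ess_point n B i k} {A. asm_covers n A B}
         \<and> (\<forall>A. asm_covers n A B \<longrightarrow> asm_edge n A B)"
proof (intro conjI allI impI)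
  let ?r = "\<lambda>(i, k). rop n i (Suc i) k (Suc k) B"
  have "?r ` {(i, k). ess_point n B i k} = {A. asm_covers n A B}"
  proof (intro equalityI subsetI)
    fix A assume "A \<in> ?r ` {(i, k). ess_point n B i k}"
    then show "A \<in> {A. asm_covers n A B}"
      using asm_covers_rop_ess_point[OF assms] by auto
  next
    fix A assume "A \<in> {A. asm_covers n A B}"
    then obtain i k where "ess_point n B i k" "A = ?r (i, k)"
      using asm_covers_imp_rop_ess_point[OF assms] by auto
    then show "A \<in> ?r ` {(i, k). ess_point n B i k}" by blast
  qed
  with inj_on_rop_ess_point[OF assms]
  show "bij_betw ?r {(i, k). ess_point n B i k} {A. asm_covers n A B}"
    by (simp add: bij_betw_def)
next
  fix A assume "asm_covers n A B"
  then obtain i k where "ess_point n B i k" "A = rop n i (Suc i) k (Suc k) B"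
    using asm_covers_imp_rop_ess_point[OF assms] by blast
  then show "asm_edge n A B"
    using asm_edge_rop_ess_point[OF assms] by simp
qed

end
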